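(* Let $M$, $A$ and $B$ be three packed matrices. Then, (1) $\mathrm{ov}(A, B) \leq_{\mathrm{M}} M$ if and only if there are two packed matrices $A'$ and $B'$ such that $A \leq_{\mathrm{M}} A'$, $B \leq_{\mathrm{M}} B'$, and $M \in \mathrm{Sh}_c(A', B')$; (2) $M \leq_{\mathrm{M}} \mathrm{un}(A, B)$ if and only if there are two packed matrices $A'$ and $B'$ such that $A' \leq_{\mathrm{M}} A$, $B' \leq_{\mathrm{M}} B$, and $M \in \mathrm{Sh}_c(A', B')$.
   Context: Let $k \geq 1$ and $A_k := \{0,1,\dots,k\}$. A ($k$-)packed matrix of size $n$ is an $n\times n$ matrix with entries in $A_k$ with at least one nonzero entry in each row and column. For packed $M_1, M_2$ of sizes $n_1, n_2$: $\mathrm{ov}(M_1,M_2) := \begin{pmatrix} M_1 & 0 \\ 0 & M_2\end{pmatrix}$ (over operator) and $\mathrm{un}(M_1,M_2) := \begin{pmatrix} 0 & M_1 \\ M_2 & 0 \end{pmatrix}$ (under operator), with zero blocks of appropriate sizes. The column shifted shuffle $\mathrm{Sh}_c(M_1,M_2)$ is the set of all matrices obtained by shuffling the columns of $M_1$ with an $n_2 \times n_1$ zero block placed below it, with the columns of $M_2$ with an $n_1 \times n_2$ zero block placed above it. Define $\to$ on packed matrices of size $n$: $M_1 \to M_2$ if there is $i \in [n-1]$ such that, with $s$ the number of $0$ ending the $i$th column of $M_1$ and $p$ the number of $0$ starting its $(i+1)$st column, $s + p \geq n$ and $M_2$ is obtained from $M_1$ by exchanging its $i$th and $(i+1)$st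 columns. $\leq_{\mathrm{M}}$ is the reflexive and transitive closure of $\to$. *)

theory Defs
  imports Main
begin

text \<open>A matrix is represented as the list of its columns; each column is a list of
entries, top row first. So for a matrix M of size n, M ! j ! i is the entry in
row i, column j (0-indexed).\<close>

type_synonym mat = "nat list list"

definition packed :: "nat \<Rightarrow> mat \<Rightarrow> bool" where
  "packed k M \<longleftrightarrow>
     (let n = length M in
       (\<forall>c\<in>set M. length c = n \<and> set c \<subseteq> {0..k}) \<and>
       (\<forall>c\<in>set M. \<exists>x\<in>set c. x \<noteq> 0) \<and>
       (\<forall>i<n. \<exists>j<n. M ! j ! i \<noteq> 0))"

definition ov :: "mat \<Rightarrow> mat \<Rightarrow> mat" where
  "ov M1 M2 = map (\<lambda>c. c @ replicate (length M2) 0) M1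
            @ map (\<lambda>c. replicate (length M1) 0 @ c) M2"

definition un :: "mat \<Rightarrow> mat \<Rightarrow> mat" where
  "un M1 M2 = map (\<lambda>c. replicate (length M1) 0 @ c) M2
            @ map (\<lambda>c. c @ replicate (length M2) 0) M1"

definition Sh_c :: "mat \<Rightarrow> mat \<Rightarrow> mat set" where
  "Sh_c M1 M2 = shuffles (map (\<lambda>c. c @ replicate (length M2) 0) M1)
                         (map (\<lambda>c. replicate (length M1) 0 @ c) M2)"

definition trailing_zeros :: "nat list \<Rightarrow> nat" where
  "trailing_zeros c = length (takeWhile (\<lambda>x. x = 0) (rev c))"

definition leading_zeros :: "nat list \<Rightarrow> nat" where
  "leading_zeros c = length (takeWhile (\<lambda>x. x = 0) c)"

text \<open>One step of the relation; column indices are 0-based, so the paper's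
i \<in> [n-1] (columns i, i+1, 1-based) corresponds to i with Suc i < n here.\<close>
definition mstep :: "nat \<Rightarrow> mat \<Rightarrow> mat \<Rightarrow> bool" where
  "mstep k M1 M2 \<longleftrightarrow> packed k M1 \<and>
     (\<exists>i. Suc i < length M1 \<and>
          trailing_zeros (M1 ! i) + leading_zeros (M1 ! Suc i) \<ge> length M1 \<and>
          M2 = M1[i := M1 ! Suc i, Suc i := M1 ! i])"

definition mle :: "nat \<Rightarrow> mat \<Rightarrow> mat \<Rightarrow> bool" where
  "mle k = (mstep k)\<^sup>*\<^sup>*"

end

theory Submission
  imports Defs
begin

text \<open>Two adjacent columns may be exchanged when their zero regions together cover every
row. In a column shifted shuffle of \<open>A\<close> and \<open>B\<close>, the columns coming from \<open>A\<close> vanish on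
the lower \<open>length B\<close> rows and those coming from \<open>B\<close> on the upper \<open>length A\<close> rows. Hence
exchanging two \<open>A\<close>-columns (resp. \<open>B\<close>-columns) is a step of \<open>A\<close> (resp. \<open>B\<close>); an
\<open>A\<close>-column can always be exchanged with a following \<open>B\<close>-column, which merely yields
another shuffle; and a \<open>B\<close>-column can never be exchanged with a following \<open>A\<close>-column,
since both have a nonzero entry. So the shuffles of \<open>A'\<close> and \<open>B'\<close> with \<open>mle k A A'\<close> and
\<open>mle k B B'\<close> form a step-closed set containing \<open>ov A B\<close>; conversely, starting from
\<open>ov A B\<close> one rearranges the two blocks into \<open>A'\<close> and \<open>B'\<close> and then moves \<open>B'\<close>-columns
leftwards to reach any such shuffle. The statement for \<open>un A B\<close> is the mirror image.\<close>

definition zeros_below :: "nat \<Rightarrow> nat list \<Rightarrow> nat list" where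
  "zeros_below m c = c @ replicate m 0"

definition zeros_above :: "nat \<Rightarrow> nat list \<Rightarrow> nat list" where
  "zeros_above m c = replicate m 0 @ c"

definition swappable :: "nat \<Rightarrow> nat list \<Rightarrow> nat list \<Rightarrow> bool" where
  "swappable n x y \<longleftrightarrow> n \<le> trailing_zeros x + leading_zeros y"

lemma Sh_c_eq:
  "Sh_c A B = shuffles (map (zeros_below (length B)) A) (map (zeros_above (length A)) B)"
  unfolding Sh_c_def zeros_below_def[abs_def] zeros_above_def[abs_def] ..

lemma ov_eq: "ov A B = map (zeros_below (length B)) A @ map (zeros_above (length A)) B"
  unfolding ov_def zeros_below_def[abs_def] zeros_above_def[abs_def] ..

lemma un_eq: "un A B = map (zeros_above (length A)) B @ map (zeros_below (length B)) A"
  unfolding un_def zeros_below_def[abs_def] zeros_above_def[abs_def] ..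

lemma trailing_zeros_zeros_below: "trailing_zeros (zeros_below m c) = trailing_zeros c + m"
  unfolding trailing_zeros_def zeros_below_def by (simp, subst takeWhile_append2) auto

lemma leading_zeros_zeros_above: "leading_zeros (zeros_above m c) = m + leading_zeros c"
  unfolding leading_zeros_def zeros_above_def by (subst takeWhile_append2) auto

lemma leading_zeros_zeros_below:
  "\<exists>x\<in>set c. x \<noteq> 0 \<Longrightarrow> leading_zeros (zeros_below m c) = leading_zeros c"
  by (auto simp: leading_zeros_def zeros_below_def)

lemma trailing_zeros_zeros_above:
  "\<exists>x\<in>set c. x \<noteq> 0 \<Longrightarrow> trailing_zeros (zeros_above m c) = trailing_zeros c"
  by (auto simp: trailing_zeros_def zeros_above_def)

lemma length_takeWhile_less: "x \<in> set xs \<Longrightarrow> \<not> P x \<Longrightarrow> length (takeWhile P xs) < length xs"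
  by (induction xs) auto

lemma leading_zeros_less_length:
  assumes "\<exists>x\<in>set c. x \<noteq> 0"
  shows "leading_zeros c < length c"
proof -
  obtain x where "x \<in> set c" "x \<noteq> 0"
    using assms by blast
  then show ?thesis
    using length_takeWhile_less[of x c "\<lambda>x. x = 0"] by (simp add: leading_zeros_def)
qed

lemma trailing_zeros_less_length:
  assumes "\<exists>x\<in>set c. x \<noteq> 0"
  shows "trailing_zeros c < length c"
proof -
  obtain x where "x \<in> set (rev c)" "x \<noteq> 0"
    using assms by auto
  then show ?thesis
    using length_takeWhile_less[of x "rev c" "\<lambda>x. x = 0"] by (simp add: trailing_zeros_def)
qed

lemma swappable_zeros_below_iff:
  "\<exists>x\<in>set b. x \<noteq> 0 \<Longrightarrow>
     swappable (n + m) (zeros_below m a) (zeros_below m b) \<longleftrightarrow> swappable n a b"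
  by (simp add: swappable_def trailing_zeros_zeros_below leading_zeros_zeros_below)

lemma swappable_zeros_above_iff:
  "\<exists>x\<in>set a. x \<noteq> 0 \<Longrightarrow>
     swappable (m + n) (zeros_above m a) (zeros_above m b) \<longleftrightarrow> swappable n a b"
  by (simp add: swappable_def trailing_zeros_zeros_above leading_zeros_zeros_above)

lemma swappable_zeros_below_above: "swappable (m + n) (zeros_below n a) (zeros_above m b)"
  by (simp add: swappable_def trailing_zeros_zeros_below leading_zeros_zeros_above)

lemma not_swappable_zeros_above_below:
  assumes "\<exists>x\<in>set a. x \<noteq> 0" "\<exists>x\<in>set b. x \<noteq> 0" "length a = m" "length b = n"
  shows "\<not> swappable (m + n) (zeros_above m b) (zeros_below n a)"
  using assms leading_zeros_less_length[of a] trailing_zeros_less_length[of b]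
  by (simp add: swappable_def trailing_zeros_zeros_above leading_zeros_zeros_below)

lemma packed_iff:
  "packed k M \<longleftrightarrow>
     (\<forall>c\<in>set M. length c = length M \<and> set c \<subseteq> {0..k}) \<and>
     (\<forall>c\<in>set M. \<exists>x\<in>set c. x \<noteq> 0) \<and>
     (\<forall>i<length M. \<exists>c\<in>set M. c ! i \<noteq> 0)"
proof -
  have "(\<exists>j<length M. M ! j ! i \<noteq> 0) \<longleftrightarrow> (\<exists>c\<in>set M. c ! i \<noteq> 0)" for i
    by (metis in_set_conv_nth)
  then show ?thesis
    unfolding packed_def Let_def by simp
qed

lemma packed_cong: "set M = set N \<Longrightarrow> length M = length N \<Longrightarrow> packed k M \<longleftrightarrow> packed k N"
  by (simp add: packed_iff)

lemma packed_column_length: "packed k A \<Longrightarrow> a \<in> set A \<Longrightarrow> length a = length A"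
  unfolding packed_iff by blast

lemma packed_column_nonzero: "packed k A \<Longrightarrow> a \<in> set A \<Longrightarrow> \<exists>x\<in>set a. x \<noteq> 0"
  unfolding packed_iff by blast

lemma packed_Sh_c:
  assumes A: "packed k A" and B: "packed k B" and M: "M \<in> Sh_c A B"
  shows "packed k M"
proof -
  let ?n1 = "length A" and ?n2 = "length B"
  have set_M: "set M = zeros_below ?n2 ` set A \<union> zeros_above ?n1 ` set B"
    using set_shuffles[OF M[unfolded Sh_c_eq]] by simp
  have length_M: "length M = ?n1 + ?n2"
    using length_shuffles[OF M[unfolded Sh_c_eq]] by simp
  have columns: "\<forall>c\<in>set M. length c = length M \<and> set c \<subseteq> {0..k} \<and> (\<exists>x\<in>set c. x \<noteq> 0)"
    using A B unfolding set_M length_M packed_iff zeros_below_def zeros_above_def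
    by (fastforce simp: subset_iff)
  have "\<exists>c\<in>set M. c ! i \<noteq> 0" if i: "i < ?n1 + ?n2" for i
  proof (cases "i < ?n1")
    case True
    then obtain a where "a \<in> set A" "a ! i \<noteq> 0"
      using A unfolding packed_iff by blast
    moreover have "zeros_below ?n2 a ! i = a ! i"
      using True packed_column_length[OF A \<open>a \<in> set A\<close>]
      by (simp add: zeros_below_def nth_append)
    ultimately show ?thesis
      unfolding set_M by (metis UnI1 image_eqI)
  next
    case False
    with i have "i - ?n1 < ?n2"
      by simp
    then obtain b where "b \<in> set B" "b ! (i - ?n1) \<noteq> 0"
      using B unfolding packed_iff by blast
    moreover have "zeros_above ?n1 b ! i = b ! (i - ?n1)"
      using False by (simp add: zeros_above_def nth_append)
    ultimately show ?thesis
      unfolding set_M by (metis UnI2 image_eqI)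
  qed
  with columns length_M show ?thesis
    unfolding packed_iff by auto
qed

lemma append_in_shuffles: "xs @ ys \<in> shuffles xs ys"
  by (induction xs) (auto intro: Cons_in_shuffles_leftI)

lemma ov_in_Sh_c: "ov A B \<in> Sh_c A B"
  unfolding ov_eq Sh_c_eq by (rule append_in_shuffles)

lemma un_in_Sh_c: "un A B \<in> Sh_c A B"
  unfolding un_eq Sh_c_eq by (subst shuffles_commutes) (rule append_in_shuffles)

lemma mstep_iff_swap:
  "mstep k M N \<longleftrightarrow> packed k M \<and>
     (\<exists>us x y vs. M = us @ x # y # vs \<and> N = us @ y # x # vs \<and> swappable (length M) x y)"
proof
  assume "mstep k M N"
  then obtain i where packed: "packed k M" and i: "Suc i < length M"
    and sw: "swappable (length M) (M ! i) (M ! Suc i)"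
    and N: "N = M[i := M ! Suc i, Suc i := M ! i]"
    unfolding mstep_def swappable_def by blast
  have M: "M = take i M @ M ! i # M ! Suc i # drop (Suc (Suc i)) M"
    using i by (metis Cons_nth_drop_Suc Suc_lessD append_take_drop_id)
  have "N = take i M @ M ! Suc i # M ! i # drop (Suc (Suc i)) M"
    using i unfolding N by (subst M) (simp add: list_update_append)
  with M packed sw show "packed k M \<and>
     (\<exists>us x y vs. M = us @ x # y # vs \<and> N = us @ y # x # vs \<and> swappable (length M) x y)"
    by blast
next
  assume "packed k M \<and>
     (\<exists>us x y vs. M = us @ x # y # vs \<and> N = us @ y # x # vs \<and> swappable (length M) x y)"
  then obtain us x y vs where "packed k M" "M = us @ x # y # vs" "N = us @ y # x # vs"
    "swappable (length M) x y"
    by blast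
  then show "mstep k M N"
    unfolding mstep_def swappable_def
    by (intro conjI exI[of _ "length us"]) (simp_all add: nth_append list_update_append)
qed

lemma mstep_swapI:
  "packed k (us @ x # y # vs) \<Longrightarrow> swappable (length (us @ x # y # vs)) x y \<Longrightarrow>
     mstep k (us @ x # y # vs) (us @ y # x # vs)"
  unfolding mstep_iff_swap by blast

lemma mle_refl [simp]: "mle k M M"
  by (simp add: mle_def)

lemma mle_trans [trans]: "mle k L M \<Longrightarrow> mle k M N \<Longrightarrow> mle k L N"
  unfolding mle_def by simp

lemma mle_if_mstep: "mstep k M N \<Longrightarrow> mle k M N"
  unfolding mle_def by simp

lemma mstep_invariants:
  assumes "mstep k M N"
  shows "set N = set M \<and> length N = length M \<and> packed k N"
proof -
  obtain us x y vs where "packed k M" "M = us @ x # y # vs" "N = us @ y # x # vs"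
    using assms unfolding mstep_iff_swap by blast
  then show ?thesis
    using packed_cong[of N M] by auto
qed

lemma mle_invariants:
  "mle k M N \<Longrightarrow> set N = set M \<and> length N = length M \<and> (packed k M \<longrightarrow> packed k N)"
  unfolding mle_def by (induction rule: rtranclp_induct) (auto dest: mstep_invariants)

lemma mle_set_eq: "mle k M N \<Longrightarrow> set N = set M"
  using mle_invariants by blast

lemma mle_length_eq: "mle k M N \<Longrightarrow> length N = length M"
  using mle_invariants by blast

lemma mle_packed: "mle k M N \<Longrightarrow> packed k M \<Longrightarrow> packed k N"
  using mle_invariants by blast

lemma mle_map_context:
  assumes "mle k X Y" and "packed k (pre @ map g X @ post)"
    and "\<And>c d. c \<in> set X \<Longrightarrow> d \<in> set X \<Longrightarrow> swappable (length X) c d \<Longrightarrow>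
           swappable (length pre + length X + length post) (g c) (g d)"
  shows "mle k (pre @ map g X @ post) (pre @ map g Y @ post)"
  using assms(1)[unfolded mle_def]
proof (induction rule: rtranclp_induct)
  case (step Y Z)
  then have XY: "mle k X Y" and ctx: "mle k (pre @ map g X @ post) (pre @ map g Y @ post)"
    by (simp_all add: mle_def)
  obtain us x y vs where Y: "Y = us @ x # y # vs" and Z: "Z = us @ y # x # vs"
    and sw: "swappable (length Y) x y"
    using step.hyps(2) unfolding mstep_iff_swap by blast
  have "x \<in> set X" "y \<in> set X" "length Y = length X"
    using mle_set_eq[OF XY] mle_length_eq[OF XY] Y by auto
  then have "swappable (length (pre @ map g Y @ post)) (g x) (g y)"
    using assms(3) sw by (simp add: add.assoc)
  moreover have "packed k (pre @ map g Y @ post)"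
    using mle_packed[OF ctx assms(2)] .
  ultimately have "mstep k (pre @ map g Y @ post) (pre @ map g Z @ post)"
    using mstep_swapI[of k "pre @ map g us" "g x" "g y" "map g vs @ post"] Y Z by simp
  with ctx show ?case
    using mle_if_mstep mle_trans by blast
qed (simp add: mle_def)

lemma mle_move_left:
  assumes "\<forall>w\<in>set ws. swappable (length (pre @ ws @ y # post)) w y"
    and "packed k (pre @ ws @ y # post)"
  shows "mle k (pre @ ws @ y # post) (pre @ y # ws @ post)"
  using assms
proof (induction ws arbitrary: pre)
  case (Cons w ws)
  have "mle k ((pre @ [w]) @ ws @ y # post) ((pre @ [w]) @ y # ws @ post)"
    using Cons by (intro Cons.IH) auto
  then have moved: "mle k (pre @ (w # ws) @ y # post) (pre @ w # y # ws @ post)"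
    by simp
  moreover have "mstep k (pre @ w # y # ws @ post) (pre @ y # w # ws @ post)"
    using mle_packed[OF moved] Cons.prems by (intro mstep_swapI) auto
  ultimately show ?case
    using mle_if_mstep mle_trans by fastforce
qed simp

lemma mle_move_right:
  assumes "\<forall>w\<in>set ws. swappable (length (pre @ x # ws @ post)) x w"
    and "packed k (pre @ x # ws @ post)"
  shows "mle k (pre @ x # ws @ post) (pre @ ws @ x # post)"
  using assms
proof (induction ws arbitrary: pre)
  case (Cons w ws)
  have swap: "mstep k (pre @ x # w # ws @ post) (pre @ w # x # ws @ post)"
    using Cons.prems by (intro mstep_swapI) auto
  have "mle k ((pre @ [w]) @ x # ws @ post) ((pre @ [w]) @ ws @ x # post)"
    using Cons.prems mstep_invariants[OF swap] by (intro Cons.IH) auto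
  with swap show ?case
    using mle_if_mstep mle_trans by fastforce
qed simp

lemma mle_append_to_shuffle:
  assumes "zs \<in> shuffles xs ys"
    and "\<forall>x\<in>set xs. \<forall>y\<in>set ys. swappable (length (pre @ xs @ ys)) x y"
    and "packed k (pre @ xs @ ys)"
  shows "mle k (pre @ xs @ ys) (pre @ zs)"
  using assms
proof (induction xs ys arbitrary: pre zs rule: shuffles.induct)
  case (3 x xs y ys)
  from "3.prems"(1) consider
      (left) zs' where "zs = x # zs'" "zs' \<in> shuffles xs (y # ys)"
    | (right) zs' where "zs = y # zs'" "zs' \<in> shuffles (x # xs) ys"
    by auto
  then show ?case
  proof cases
    case left
    have "mle k ((pre @ [x]) @ xs @ y # ys) ((pre @ [x]) @ zs')"
      using "3.prems"(2,3) left by (intro "3.IH"(1)) auto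
    with left show ?thesis by simp
  next
    case right
    have moved: "mle k (pre @ (x # xs) @ y # ys) (pre @ y # (x # xs) @ ys)"
      using "3.prems"(2,3) by (intro mle_move_left) auto
    have "mle k ((pre @ [y]) @ (x # xs) @ ys) ((pre @ [y]) @ zs')"
      using "3.prems"(2) mle_packed[OF moved "3.prems"(3)] right by (intro "3.IH"(2)) auto
    with moved right show ?thesis
      using mle_trans by fastforce
  qed
qed simp_all

lemma mle_shuffle_to_append:
  assumes "zs \<in> shuffles xs ys"
    and "\<forall>x\<in>set xs. \<forall>y\<in>set ys. swappable (length (pre @ zs)) x y"
    and "packed k (pre @ zs)"
  shows "mle k (pre @ zs) (pre @ ys @ xs)"
  using assms
proof (induction xs ys arbitrary: pre zs rule: shuffles.induct)
  case (3 x xs y ys)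
  have length_zs: "length zs = Suc (length xs) + Suc (length ys)"
    using length_shuffles[OF "3.prems"(1)] by simp
  from "3.prems"(1) consider
      (left) zs' where "zs = x # zs'" "zs' \<in> shuffles xs (y # ys)"
    | (right) zs' where "zs = y # zs'" "zs' \<in> shuffles (x # xs) ys"
    by auto
  then show ?case
  proof cases
    case left
    have "mle k ((pre @ [x]) @ zs') ((pre @ [x]) @ (y # ys) @ xs)"
      using "3.prems"(2,3) left by (intro "3.IH"(1)) auto
    then have sorted: "mle k (pre @ zs) (pre @ x # (y # ys) @ xs)"
      using left by simp
    have "mle k (pre @ x # (y # ys) @ xs) (pre @ (y # ys) @ x # xs)"
      using mle_packed[OF sorted "3.prems"(3)] "3.prems"(2) length_zs
      by (intro mle_move_right) (auto simp: ac_simps)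
    with sorted show ?thesis
      using mle_trans by fastforce
  next
    case right
    have "mle k ((pre @ [y]) @ zs') ((pre @ [y]) @ ys @ (x # xs))"
      using "3.prems"(2,3) right by (intro "3.IH"(2)) auto
    with right show ?thesis by simp
  qed
qed simp_all

lemma mle_zeros_below_context:
  assumes "mle k X Y" "packed k X" "packed k (pre @ map (zeros_below m) X @ post)"
    and "length pre + length post = m"
  shows "mle k (pre @ map (zeros_below m) X @ post) (pre @ map (zeros_below m) Y @ post)"
  using assms(1,3)
proof (rule mle_map_context)
  fix c d assume "c \<in> set X" "d \<in> set X" "swappable (length X) c d"
  moreover have "length pre + length X + length post = length X + m"
    using assms(4) by simp
  ultimately show "swappable (length pre + length X + length post) (zeros_below m c) (zeros_below m d)"
    using packed_column_nonzero[OF assms(2)] swappable_zeros_below_iff by metis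
qed

lemma mle_zeros_above_context:
  assumes "mle k X Y" "packed k X" "packed k (pre @ map (zeros_above m) X @ post)"
    and "length pre + length post = m"
  shows "mle k (pre @ map (zeros_above m) X @ post) (pre @ map (zeros_above m) Y @ post)"
  using assms(1,3)
proof (rule mle_map_context)
  fix c d assume "c \<in> set X" "d \<in> set X" "swappable (length X) c d"
  moreover have "length pre + length X + length post = m + length X"
    using assms(4) by simp
  ultimately show "swappable (length pre + length X + length post) (zeros_above m c) (zeros_above m d)"
    using packed_column_nonzero[OF assms(2)] swappable_zeros_above_iff by metis
qed

lemma mle_ov_left:
  assumes "mle k A A'" "packed k A" "packed k B"
  shows "mle k (ov A B) (ov A' B)"
proof -
  have "mle k ([] @ map (zeros_below (length B)) A @ map (zeros_above (length A)) B)
              ([] @ map (zeros_below (length B)) A' @ map (zeros_above (length A)) B)"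
    using packed_Sh_c[OF assms(2,3) ov_in_Sh_c]
    by (intro mle_zeros_below_context[OF assms(1,2)]) (simp_all add: ov_eq)
  then show ?thesis
    using mle_length_eq[OF assms(1)] by (simp add: ov_eq)
qed

lemma mle_ov_right:
  assumes "mle k B B'" "packed k A" "packed k B"
  shows "mle k (ov A B) (ov A B')"
proof -
  have "mle k (map (zeros_below (length B)) A @ map (zeros_above (length A)) B @ [])
              (map (zeros_below (length B)) A @ map (zeros_above (length A)) B' @ [])"
    using packed_Sh_c[OF assms(2,3) ov_in_Sh_c]
    by (intro mle_zeros_above_context[OF assms(1,3)]) (simp_all add: ov_eq)
  then show ?thesis
    using mle_length_eq[OF assms(1)] by (simp add: ov_eq)
qed

lemma mle_un_left:
  assumes "mle k A' A" "packed k A'" "packed k B"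
  shows "mle k (un A' B) (un A B)"
proof -
  have "mle k (map (zeros_above (length A')) B @ map (zeros_below (length B)) A' @ [])
              (map (zeros_above (length A')) B @ map (zeros_below (length B)) A @ [])"
    using packed_Sh_c[OF assms(2,3) un_in_Sh_c]
    by (intro mle_zeros_below_context[OF assms(1,2)]) (simp_all add: un_eq)
  then show ?thesis
    using mle_length_eq[OF assms(1)] by (simp add: un_eq)
qed

lemma mle_un_right:
  assumes "mle k B' B" "packed k A" "packed k B'"
  shows "mle k (un A B') (un A B)"
proof -
  have "mle k ([] @ map (zeros_above (length A)) B' @ map (zeros_below (length B')) A)
              ([] @ map (zeros_above (length A)) B @ map (zeros_below (length B')) A)"
    using packed_Sh_c[OF assms(2,3) un_in_Sh_c]
    by (intro mle_zeros_above_context[OF assms(1,3)]) (simp_all add: un_eq)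
  then show ?thesis
    using mle_length_eq[OF assms(1)] by (simp add: un_eq)
qed

lemma mle_ov_Sh_c:
  assumes "packed k A" "packed k B" "M \<in> Sh_c A B"
  shows "mle k (ov A B) M"
proof -
  have "mle k ([] @ map (zeros_below (length B)) A @ map (zeros_above (length A)) B) ([] @ M)"
  proof (rule mle_append_to_shuffle)
    show "M \<in> shuffles (map (zeros_below (length B)) A) (map (zeros_above (length A)) B)"
      using assms(3) by (simp add: Sh_c_eq)
    show "packed k ([] @ map (zeros_below (length B)) A @ map (zeros_above (length A)) B)"
      using packed_Sh_c[OF assms(1,2) ov_in_Sh_c] by (simp add: ov_eq)
  qed (auto simp: swappable_zeros_below_above)
  then show ?thesis
    by (simp add: ov_eq)
qed

lemma mle_Sh_c_un:
  assumes "packed k A" "packed k B" "M \<in> Sh_c A B"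
  shows "mle k M (un A B)"
proof -
  have M: "M \<in> shuffles (map (zeros_below (length B)) A) (map (zeros_above (length A)) B)"
    using assms(3) by (simp add: Sh_c_eq)
  have "mle k ([] @ M) ([] @ map (zeros_above (length A)) B @ map (zeros_below (length B)) A)"
    using M length_shuffles[OF M] packed_Sh_c[OF assms]
    by (intro mle_shuffle_to_append) (auto simp: swappable_zeros_below_above)
  then show ?thesis
    by (simp add: un_eq)
qed

lemma mle_ov_if_Sh_c:
  assumes "packed k A" "packed k B" "mle k A A'" "mle k B B'" "M \<in> Sh_c A' B'"
  shows "mle k (ov A B) M"
proof -
  have "mle k (ov A B) (ov A' B)"
    using assms(3,1,2) by (rule mle_ov_left)
  also have "mle k (ov A' B) (ov A' B')"
    using assms(4) mle_packed[OF assms(3,1)] assms(2) by (rule mle_ov_right)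
  also have "mle k (ov A' B') M"
    using mle_packed[OF assms(3,1)] mle_packed[OF assms(4,2)] assms(5) by (rule mle_ov_Sh_c)
  finally show ?thesis .
qed

lemma mle_un_if_Sh_c:
  assumes "packed k A'" "packed k B'" "mle k A' A" "mle k B' B" "M \<in> Sh_c A' B'"
  shows "mle k M (un A B)"
proof -
  have "mle k M (un A' B')"
    using assms(1,2,5) by (rule mle_Sh_c_un)
  also have "mle k (un A' B') (un A B')"
    using assms(3,1,2) by (rule mle_un_left)
  also have "mle k (un A B') (un A B)"
    using assms(4) mle_packed[OF assms(3,1)] assms(2) by (rule mle_un_right)
  finally show ?thesis .
qed

lemma shuffles_iff_filter:
  assumes "\<forall>x\<in>set xs. P x" "\<forall>y\<in>set ys. \<not> P y"
  shows "zs \<in> shuffles xs ys \<longleftrightarrow> filter P zs = xs \<and> filter (\<lambda>z. \<not> P z) zs = ys"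
proof -
  have "partition P -` {(xs, ys)} = shuffles xs ys"
    using assms by (intro inv_image_partition) auto
  then have "zs \<in> shuffles xs ys \<longleftrightarrow> partition P zs = (xs, ys)"
    by blast
  then show ?thesis
    by (simp add: o_def)
qed

lemma shuffles_swap_adjacent:
  assumes zs: "us @ x # y # vs \<in> shuffles xs ys"
    and P: "\<forall>x\<in>set xs. P x" "\<forall>y\<in>set ys. \<not> P y"
  obtains (left) xs1 xs2 where "P x" "P y" "xs = xs1 @ x # y # xs2"
      "us @ y # x # vs \<in> shuffles (xs1 @ y # x # xs2) ys"
    | (right) ys1 ys2 where "\<not> P x" "\<not> P y" "ys = ys1 @ x # y # ys2"
      "us @ y # x # vs \<in> shuffles xs (ys1 @ y # x # ys2)"
    | (mixed) "P x \<noteq> P y" "us @ y # x # vs \<in> shuffles xs ys"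
proof -
  have xs: "xs = filter P (us @ x # y # vs)" and ys: "ys = filter (\<lambda>z. \<not> P z) (us @ x # y # vs)"
    using zs shuffles_iff_filter[OF P] by auto
  consider "P x" "P y" | "\<not> P x" "\<not> P y" | "P x \<noteq> P y"
    by blast
  then show thesis
  proof cases
    case 1
    let ?xs' = "filter P us @ y # x # filter P vs"
    have "filter P (us @ y # x # vs) = ?xs'" "filter (\<lambda>z. \<not> P z) (us @ y # x # vs) = ys"
      "\<forall>z\<in>set ?xs'. P z"
      using 1 ys by auto
    then have "us @ y # x # vs \<in> shuffles ?xs' ys"
      using shuffles_iff_filter[of ?xs' P ys] P(2) by blast
    with 1 xs show thesis
      by (intro left) auto
  next
    case 2
    let ?ys' = "filter (\<lambda>z. \<not> P z) us @ y # x # filter (\<lambda>z. \<not> P z) vs"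
    have "filter P (us @ y # x # vs) = xs" "filter (\<lambda>z. \<not> P z) (us @ y # x # vs) = ?ys'"
      "\<forall>z\<in>set ?ys'. \<not> P z"
      using 2 xs by auto
    then have "us @ y # x # vs \<in> shuffles xs ?ys'"
      using shuffles_iff_filter[of xs P ?ys'] P(1) by blast
    with 2 ys show thesis
      by (intro right) auto
  next
    case 3
    then have "filter P (us @ y # x # vs) = xs" "filter (\<lambda>z. \<not> P z) (us @ y # x # vs) = ys"
      using xs ys by auto
    then have "us @ y # x # vs \<in> shuffles xs ys"
      using shuffles_iff_filter[OF P] by blast
    with 3 show thesis
      by (rule mixed)
  qed
qed

lemma map_eq_adjacent_swap:
  assumes "map f xs = us @ x # y # vs"
  obtains as a b bs where "xs = as @ a # b # bs" "x = f a" "y = f b"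
    "map f (as @ b # a # bs) = us @ y # x # vs"
  using assms by (auto simp: map_eq_append_conv map_eq_Cons_conv)

lemma Sh_c_adjacent_swap_cases:
  assumes N: "us @ x # y # vs \<in> Sh_c A B" and A: "packed k A" and B: "packed k B"
  obtains (left) as a b bs where "A = as @ a # b # bs"
      "x = zeros_below (length B) a" "y = zeros_below (length B) b"
      "us @ y # x # vs \<in> Sh_c (as @ b # a # bs) B"
    | (right) as a b bs where "B = as @ a # b # bs"
      "x = zeros_above (length A) a" "y = zeros_above (length A) b"
      "us @ y # x # vs \<in> Sh_c A (as @ b # a # bs)"
    | (left_right) a b where "a \<in> set A" "b \<in> set B"
      "x = zeros_below (length B) a" "y = zeros_above (length A) b" "us @ y # x # vs \<in> Sh_c A B"
    | (right_left) a b where "a \<in> set A" "b \<in> set B"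
      "x = zeros_above (length A) b" "y = zeros_below (length B) a" "us @ y # x # vs \<in> Sh_c A B"
proof -
  let ?XA = "map (zeros_below (length B)) A" and ?XB = "map (zeros_above (length A)) B"
  define top where "top c \<longleftrightarrow> set (drop (length A) c) \<subseteq> {0}" for c :: "nat list"
  have top_XA: "\<forall>c\<in>set ?XA. top c"
    using packed_column_length[OF A] by (auto simp: top_def zeros_below_def)
  have top_XB: "\<forall>c\<in>set ?XB. \<not> top c"
    using packed_column_nonzero[OF B] by (fastforce simp: top_def zeros_above_def)
  from N[unfolded Sh_c_eq] top_XA top_XB show thesis
  proof (cases rule: shuffles_swap_adjacent)
    case (left xs1 xs2)
    obtain as a b bs where split: "A = as @ a # b # bs" "x = zeros_below (length B) a"
      "y = zeros_below (length B) b"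
      and swapped: "map (zeros_below (length B)) (as @ b # a # bs) = xs1 @ y # x # xs2"
      using left(3) by (rule map_eq_adjacent_swap)
    have "us @ y # x # vs \<in> Sh_c (as @ b # a # bs) B"
      unfolding Sh_c_eq swapped using left(4) split(1) by simp
    with split show thesis
      by (rule that(1))
  next
    case (right ys1 ys2)
    obtain as a b bs where split: "B = as @ a # b # bs" "x = zeros_above (length A) a"
      "y = zeros_above (length A) b"
      and swapped: "map (zeros_above (length A)) (as @ b # a # bs) = ys1 @ y # x # ys2"
      using right(3) by (rule map_eq_adjacent_swap)
    have "us @ y # x # vs \<in> Sh_c A (as @ b # a # bs)"
      unfolding Sh_c_eq swapped using right(4) split(1) by simp
    with split show thesis
      by (rule that(2))
  next
    case mixed
    have x: "x \<in> set ?XA \<union> set ?XB" and y: "y \<in> set ?XA \<union> set ?XB"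
      using set_shuffles[OF N[unfolded Sh_c_eq]] by auto
    have swapped: "us @ y # x # vs \<in> Sh_c A B"
      using mixed(2) by (simp add: Sh_c_eq)
    consider "top x" "\<not> top y" | "\<not> top x" "top y"
      using mixed(1) by blast
    then show thesis
    proof cases
      case 1
      then obtain a b where "a \<in> set A" "b \<in> set B"
        "x = zeros_below (length B) a" "y = zeros_above (length A) b"
        using x y top_XA top_XB by auto
      with swapped show thesis
        using that(3) by blast
    next
      case 2
      then obtain a b where "a \<in> set A" "b \<in> set B"
        "x = zeros_above (length A) b" "y = zeros_below (length B) a"
        using x y top_XA top_XB by auto
      with swapped show thesis
        using that(4) by blast
    qed
  qed
qed

lemma Sh_c_mstep_forward:
  assumes N: "N \<in> Sh_c A B" and A: "packed k A" and B: "packed k B" and step: "mstep k N N'"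
  obtains A' B' where "mle k A A'" "mle k B B'" "N' \<in> Sh_c A' B'"
proof -
  obtain us x y vs where N_eq: "N = us @ x # y # vs" and N'_eq: "N' = us @ y # x # vs"
    and sw: "swappable (length N) x y"
    using step unfolding mstep_iff_swap by blast
  have length_N: "length N = length A + length B"
    using length_shuffles[OF N[unfolded Sh_c_eq]] by simp
  from N[unfolded N_eq] A B show thesis
  proof (cases rule: Sh_c_adjacent_swap_cases)
    case (left as a b bs)
    have "\<exists>z\<in>set b. z \<noteq> 0"
      using packed_column_nonzero[OF A] left(1) by simp
    moreover have "swappable (length A + length B) (zeros_below (length B) a) (zeros_below (length B) b)"
      using sw length_N left(2,3) by simp
    ultimately have "swappable (length A) a b"
      by (simp add: swappable_zeros_below_iff)
    then have "mstep k A (as @ b # a # bs)"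
      using A left(1) mstep_swapI by blast
    with left(4) show thesis
      using that N'_eq mle_if_mstep mle_refl by blast
  next
    case (right as a b bs)
    have "\<exists>z\<in>set a. z \<noteq> 0"
      using packed_column_nonzero[OF B] right(1) by simp
    moreover have "swappable (length A + length B) (zeros_above (length A) a) (zeros_above (length A) b)"
      using sw length_N right(2,3) by simp
    ultimately have "swappable (length B) a b"
      by (simp add: swappable_zeros_above_iff)
    then have "mstep k B (as @ b # a # bs)"
      using B right(1) mstep_swapI by blast
    with right(4) show thesis
      using that N'_eq mle_if_mstep mle_refl by blast
  next
    case left_right
    then show thesis
      using that N'_eq mle_refl by blast
  next
    case (right_left a b)
    have "\<not> swappable (length A + length B) (zeros_above (length A) b) (zeros_below (length B) a)"
      using right_left(1,2) packed_column_nonzero[OF A] packed_column_nonzero[OF B]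
        packed_column_length[OF A] packed_column_length[OF B]
      by (intro not_swappable_zeros_above_below) auto
    with sw length_N right_left(3,4) show thesis
      by simp
  qed
qed

lemma Sh_c_mstep_backward:
  assumes N': "N' \<in> Sh_c A B" and A: "packed k A" and B: "packed k B" and step: "mstep k N N'"
  obtains A' B' where "packed k A'" "packed k B'" "mle k A' A" "mle k B' B" "N \<in> Sh_c A' B'"
proof -
  obtain us x y vs where N_eq: "N = us @ x # y # vs" and N'_eq: "N' = us @ y # x # vs"
    and sw: "swappable (length N) x y"
    using step unfolding mstep_iff_swap by blast
  have length_N: "length N = length A + length B"
    using length_shuffles[OF N'[unfolded Sh_c_eq]] N_eq N'_eq by simp
  from N'[unfolded N'_eq] A B show thesis
  proof (cases rule: Sh_c_adjacent_swap_cases)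
    case (left as a b bs)
    let ?A' = "as @ b # a # bs"
    have A': "packed k ?A'"
      using A left(1) packed_cong[of ?A' A] by auto
    have "\<exists>z\<in>set a. z \<noteq> 0"
      using packed_column_nonzero[OF A] left(1) by simp
    moreover have "swappable (length A + length B) (zeros_below (length B) b) (zeros_below (length B) a)"
      using sw length_N left(2,3) by simp
    ultimately have "swappable (length A) b a"
      by (simp add: swappable_zeros_below_iff)
    then have "mstep k ?A' A"
      using A' left(1) mstep_swapI[of k as b a bs] by simp
    with left(4) A' B show thesis
      using that N_eq mle_if_mstep mle_refl by blast
  next
    case (right as a b bs)
    let ?B' = "as @ b # a # bs"
    have B': "packed k ?B'"
      using B right(1) packed_cong[of ?B' B] by auto
    have "\<exists>z\<in>set b. z \<noteq> 0"
      using packed_column_nonzero[OF B] right(1) by simp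
    moreover have "swappable (length A + length B) (zeros_above (length A) b) (zeros_above (length A) a)"
      using sw length_N right(2,3) by simp
    ultimately have "swappable (length B) b a"
      by (simp add: swappable_zeros_above_iff)
    then have "mstep k ?B' B"
      using B' right(1) mstep_swapI[of k as b a bs] by simp
    with right(4) A B' show thesis
      using that N_eq mle_if_mstep mle_refl by blast
  next
    case (left_right a b)
    have "\<not> swappable (length A + length B) (zeros_above (length A) b) (zeros_below (length B) a)"
      using left_right(1,2) packed_column_nonzero[OF A] packed_column_nonzero[OF B]
        packed_column_length[OF A] packed_column_length[OF B]
      by (intro not_swappable_zeros_above_below) auto
    with sw length_N left_right(3,4) show thesis
      by simp
  next
    case right_left
    with A B show thesis
      using that N_eq mle_refl by blast
  qed
qed

lemma Sh_c_if_mle_ov: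
  assumes "mle k (ov A B) M" "packed k A" "packed k B"
  shows "\<exists>A' B'. packed k A' \<and> packed k B' \<and> mle k A A' \<and> mle k B B' \<and> M \<in> Sh_c A' B'"
  using assms(1)[unfolded mle_def]
proof (induction rule: rtranclp_induct)
  case base
  then show ?case
    using assms(2,3) ov_in_Sh_c mle_refl by blast
next
  case (step N N')
  then obtain A' B' where A': "packed k A'" "mle k A A'" and B': "packed k B'" "mle k B B'"
    and N: "N \<in> Sh_c A' B'"
    by blast
  obtain A'' B'' where "mle k A' A''" "mle k B' B''" "N' \<in> Sh_c A'' B''"
    using Sh_c_mstep_forward[OF N A'(1) B'(1) step(2)] .
  with A' B' show ?case
    using mle_packed mle_trans by blast
qed

lemma Sh_c_if_mle_un:
  assumes "mle k M (un A B)" "packed k A" "packed k B"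
  shows "\<exists>A' B'. packed k A' \<and> packed k B' \<and> mle k A' A \<and> mle k B' B \<and> M \<in> Sh_c A' B'"
  using assms(1)[unfolded mle_def]
proof (induction rule: converse_rtranclp_induct)
  case base
  then show ?case
    using assms(2,3) un_in_Sh_c mle_refl by blast
next
  case (step N N')
  then obtain A' B' where A': "packed k A'" "mle k A' A" and B': "packed k B'" "mle k B' B"
    and N': "N' \<in> Sh_c A' B'"
    by blast
  obtain A'' B'' where "packed k A''" "packed k B''" "mle k A'' A'" "mle k B'' B'"
    "N \<in> Sh_c A'' B''"
    using Sh_c_mstep_backward[OF N' A'(1) B'(1) step(1)] .
  with A' B' show ?case
    using mle_trans by blast
qed

theorem lemma2p1:
  fixes k :: nat and M A B :: mat
  assumes "k \<ge> 1" and "packed k M" and "packed k A" and "packed k B"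
  shows "(mle k (ov A B) M \<longleftrightarrow>
            (\<exists>A' B'. packed k A' \<and> packed k B' \<and> mle k A A' \<and> mle k B B' \<and> M \<in> Sh_c A' B'))
       \<and> (mle k M (un A B) \<longleftrightarrow>
            (\<exists>A' B'. packed k A' \<and> packed k B' \<and> mle k A' A \<and> mle k B' B \<and> M \<in> Sh_c A' B'))"
  using Sh_c_if_mle_ov[OF _ assms(3,4)] Sh_c_if_mle_un[OF _ assms(3,4)]
    mle_ov_if_Sh_c[OF assms(3,4)] mle_un_if_Sh_c
  by blast

end
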